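(* Let $H$ and $G$ be Abelian groups that are isotyped (with respect to the variety of Abelian groups), and suppose one of them is free and finitely generated. Then $H$ and $G$ are isomorphic.
   Context: Let $\Theta$ be the variety of Abelian groups. $X^0=\{x_1,x_2,\dots\}$ is an infinite set of variables; for finite $X\subset X^0$, $W(X)$ is the free $\Theta$-algebra on $X$; homomorphisms $W(X)\to H$ are points. For each finite $X$, the set $\Phi(X)$ of formulas of sort $X$ is defined inductively: equalities $w\equiv w'$ ($w,w'\in W(X)$) are in $\Phi(X)$; $\Phi(X)$ is closed under $\neg,\vee,\wedge$ and $\exists x$ for $x\in X$; and for each homomorphism $s:W(X)\to W(Y)$ and $u\in\Phi(X)$, $s_*u\in\Phi(Y)$. Values $Val^X_H(u)\subseteq\mathrm{Hom}(W(X),H)$: $Val^X_H(w\equiv w')=\{\mu:\mu(w)=\mu(w')\}$; $\mu\in Val^X_H(\exists x\,u)$ iff some point $\nu$ agreeing with $\mu$ on $X\setminus\{x\}$ lies in $Val^X_H(u)$; $\vee,\wedge,\neg$ are union, intersection, complement; $\mu\in Val^Y_H(s_*u)$ iff $\mu\circ s\in Val^X_H(u)$. The logical kernel of $\mu:W(X)\to H$ is $LKer(\mu)=\{u\in\Phi(X):\mu\in Val^X_H(u)\}$; a set $T\subseteq\Phi(X)$ is an $X$-type of $H$ if $T=LKer(\mu)$ for some point $\mu:W(X)\to H$. Algebras $H_1,H_2\in\Theta$ are isotyped if for every finite $X\subset X^0$, every $X$-type of $H_1$ is an $X$-type of $H_2$ and vice versa. *)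

theory Defs
  imports "HOL-Algebra.Free_Abelian_Groups"
begin

(* Variables are natural numbers (x_i = i). For a finite set X of variables,
  W(X) is the free Abelian group on X. Elements of W(X) live in type nat \<Rightarrow>_0 int. *)

abbreviation W :: "nat set \<Rightarrow> (nat \<Rightarrow>\<^sub>0 int) monoid" where
  "W X \<equiv> free_Abelian_group X"

(* Raw formula syntax. Subst X s u stands for s_* u where u has sort X and
  s is a homomorphism W(X) \<rightarrow> W(Y). *)

datatype fm =
    Eq "nat \<Rightarrow>\<^sub>0 int" "nat \<Rightarrow>\<^sub>0 int"
  | Neg fm
  | Disj fm fm
  | Conj fm fm
  | Ex nat fm
  | Subst "nat set" "(nat \<Rightarrow>\<^sub>0 int) \<Rightarrow> (nat \<Rightarrow>\<^sub>0 int)" fm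

inductive wf :: "nat set \<Rightarrow> fm \<Rightarrow> bool" where
  wf_Eq: "w \<in> carrier (W X) \<Longrightarrow> w' \<in> carrier (W X) \<Longrightarrow> wf X (Eq w w')"
| wf_Neg: "wf X u \<Longrightarrow> wf X (Neg u)"
| wf_Disj: "wf X u \<Longrightarrow> wf X v \<Longrightarrow> wf X (Disj u v)"
| wf_Conj: "wf X u \<Longrightarrow> wf X v \<Longrightarrow> wf X (Conj u v)"
| wf_Ex: "x \<in> X \<Longrightarrow> wf X u \<Longrightarrow> wf X (Ex x u)"
| wf_Subst: "finite X \<Longrightarrow> s \<in> hom (W X) (W Y) \<Longrightarrow> wf X u \<Longrightarrow> wf Y (Subst X s u)"

primrec sat :: "('a, 'b) monoid_scheme \<Rightarrow> nat set \<Rightarrow> fm \<Rightarrow> ((nat \<Rightarrow>\<^sub>0 int) \<Rightarrow> 'a) \<Rightarrow> bool" where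
  "sat H X (Eq w w') \<mu> = (\<mu> w = \<mu> w')"
| "sat H X (Neg u) \<mu> = (\<not> sat H X u \<mu>)"
| "sat H X (Disj u v) \<mu> = (sat H X u \<mu> \<or> sat H X v \<mu>)"
| "sat H X (Conj u v) \<mu> = (sat H X u \<mu> \<and> sat H X v \<mu>)"
| "sat H X (Ex x u) \<mu> =
     (\<exists>\<nu> \<in> hom (W X) H. (\<forall>y \<in> X - {x}. \<nu> (frag_of y) = \<mu> (frag_of y)) \<and> sat H X u \<nu>)"
| "sat H X (Subst Z s u) \<mu> = sat H Z u (\<mu> \<circ> s)"

definition Val :: "('a, 'b) monoid_scheme \<Rightarrow> nat set \<Rightarrow> fm \<Rightarrow> ((nat \<Rightarrow>\<^sub>0 int) \<Rightarrow> 'a) set" where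
  "Val H X u = {\<mu> \<in> hom (W X) H. sat H X u \<mu>}"

definition LKer :: "('a, 'b) monoid_scheme \<Rightarrow> nat set \<Rightarrow> ((nat \<Rightarrow>\<^sub>0 int) \<Rightarrow> 'a) \<Rightarrow> fm set" where
  "LKer H X \<mu> = {u. wf X u \<and> \<mu> \<in> Val H X u}"

definition is_type :: "('a, 'b) monoid_scheme \<Rightarrow> nat set \<Rightarrow> fm set \<Rightarrow> bool" where
  "is_type H X T \<longleftrightarrow> (\<exists>\<mu> \<in> hom (W X) H. T = LKer H X \<mu>)"

definition isotyped :: "('a, 'b) monoid_scheme \<Rightarrow> ('c, 'd) monoid_scheme \<Rightarrow> bool" where
  "isotyped H G \<longleftrightarrow> (\<forall>X. finite X \<longrightarrow> (\<forall>T. is_type H X T \<longleftrightarrow> is_type G X T))"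

definition free_fg :: "('a, 'b) monoid_scheme \<Rightarrow> bool" where
  "free_fg H \<longleftrightarrow> (\<exists>S :: nat set. finite S \<and> H \<cong> free_Abelian_group S)"

end

theory Submission
  imports Defs
begin

text \<open>
  Let \<mu> : W(S) \<rightarrow> H be an isomorphism and \<nu> : W(S) \<rightarrow> G a point with the same type.
  Equalities in the type make \<nu> injective, and one-variable types carry torsion-freeness
  from H to G. For surjectivity take g \<in> G and extend \<nu> by a fresh variable a \<mapsto> g. A point of
  H with the same type is not injective, because H has rank card S; so \<nu> satisfies a relation
  n\<cdot>a = v with n \<noteq> 0 and v \<in> W(S). The sort-S formula "\<exists>a. n\<cdot>a = v" then holds at \<nu>, hence
  at \<mu>, so v = n\<cdot>u in W(S), and n\<cdot>g = n\<cdot>\<nu>(u) gives g = \<nu>(u).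
\<close>

definition torsion_free :: "('a, 'b) monoid_scheme \<Rightarrow> bool" where
  "torsion_free G \<longleftrightarrow>
     (\<forall>g \<in> carrier G. \<forall>n::int. n \<noteq> 0 \<longrightarrow> g [^]\<^bsub>G\<^esub> n = \<one>\<^bsub>G\<^esub> \<longrightarrow> g = \<one>\<^bsub>G\<^esub>)"

lemma torsion_free_free_Abelian_group: "torsion_free (free_Abelian_group S)"
  by (simp add: torsion_free_def)

lemma torsion_free_iso:
  assumes "group G" "group K" "G \<cong> K" "torsion_free K"
  shows "torsion_free G"
  unfolding torsion_free_def
proof (intro ballI allI impI)
  fix g and n :: int
  assume g: "g \<in> carrier G" and n: "n \<noteq> 0" and pow: "g [^]\<^bsub>G\<^esub> n = \<one>\<^bsub>G\<^esub>"
  obtain \<phi> where \<phi>: "\<phi> \<in> iso G K" using assms(3) by (auto simp: is_iso_def)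
  then have hom: "\<phi> \<in> hom G K" and inj: "inj_on \<phi> (carrier G)" by (auto simp: iso_def bij_betw_def)
  have "\<phi> g [^]\<^bsub>K\<^esub> n = \<phi> (g [^]\<^bsub>G\<^esub> n)" using hom_int_pow[OF hom g assms(1,2)] by simp
  also have "\<dots> = \<one>\<^bsub>K\<^esub>" using pow hom_one[OF hom assms(1,2)] by simp
  finally have "\<phi> g = \<phi> \<one>\<^bsub>G\<^esub>"
    using assms(4) n hom_in_carrier[OF hom g] hom_one[OF hom assms(1,2)] by (simp add: torsion_free_def)
  then show "g = \<one>\<^bsub>G\<^esub>" using inj g monoid.one_closed[OF group.is_monoid[OF assms(1)]] by (meson inj_onD)
qed

lemma (in comm_group) torsion_free_int_pow_cancel:
  assumes "torsion_free G" "g \<in> carrier G" "h \<in> carrier G" "(n::int) \<noteq> 0" "g [^] n = h [^] n"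
  shows "g = h"
proof -
  have "(g \<otimes> inv h) [^] n = g [^] n \<otimes> inv (h [^] n)"
    using int_pow_distrib[OF assms(2) inv_closed[OF assms(3)]] int_pow_inv[OF assms(3)] by simp
  also have "\<dots> = \<one>" using assms(3,5) by simp
  finally have "g \<otimes> inv h = \<one>" using assms(1-4) by (simp add: torsion_free_def)
  then show ?thesis using assms(2,3) by (simp add: inv_solve_right')
qed

lemma hom_free_Abelian_group_zero:
  assumes "group K" "f \<in> hom (free_Abelian_group X) K"
  shows "f 0 = \<one>\<^bsub>K\<^esub>"
  using hom_one[OF assms(2) group_free_Abelian_group assms(1)] by simp

lemma hom_free_Abelian_group_cmul:
  assumes "group K" "f \<in> hom (free_Abelian_group X) K" "Poly_Mapping.keys x \<subseteq> X"
  shows "f (frag_cmul n x) = f x [^]\<^bsub>K\<^esub> n"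
  using hom_int_pow[OF assms(2) _ group_free_Abelian_group assms(1), of x n] assms(3) by simp

lemma hom_free_Abelian_group_diff:
  assumes "group K" "f \<in> hom (free_Abelian_group X) K"
    and "Poly_Mapping.keys x \<subseteq> X" "Poly_Mapping.keys y \<subseteq> X"
  shows "f (x - y) = f x \<otimes>\<^bsub>K\<^esub> inv\<^bsub>K\<^esub> (f y)"
proof -
  interpret group_hom "free_Abelian_group X" K f
    using assms(1,2) by (simp add: group_hom_def group_hom_axioms_def)
  have "f (x - y) = f (x \<otimes>\<^bsub>free_Abelian_group X\<^esub> inv\<^bsub>free_Abelian_group X\<^esub> y)"
    using assms(4) by simp
  also have "\<dots> = f x \<otimes>\<^bsub>K\<^esub> f (inv\<^bsub>free_Abelian_group X\<^esub> y)"
    by (rule hom_mult) (use assms(3,4) in simp_all)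
  also have "f (inv\<^bsub>free_Abelian_group X\<^esub> y) = inv\<^bsub>K\<^esub> (f y)"
    by (rule hom_inv) (use assms(4) in simp)
  finally show ?thesis .
qed

lemma hom_free_Abelian_group_eqI:
  assumes "group K" "f \<in> hom (free_Abelian_group X) K" "g \<in> hom (free_Abelian_group Y) K"
    and "Z \<subseteq> X" "Z \<subseteq> Y" "\<And>z. z \<in> Z \<Longrightarrow> f (frag_of z) = g (frag_of z)"
    and "Poly_Mapping.keys w \<subseteq> Z"
  shows "f w = g w"
  using assms(7)
proof (rule free_Abelian_group_induct)
  show "f 0 = g 0" using hom_free_Abelian_group_zero assms(1-3) by metis
next
  fix x y assume "Poly_Mapping.keys x \<subseteq> Z" "Poly_Mapping.keys y \<subseteq> Z" "f x = g x" "f y = g y"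
  then show "f (x - y) = g (x - y)"
    using hom_free_Abelian_group_diff[OF assms(1,2)] hom_free_Abelian_group_diff[OF assms(1,3)] assms(4,5)
    by (metis subset_trans)
qed (rule assms(6))

lemma (in comm_group) hom_free_Abelian_group_extend:
  assumes \<nu>: "\<nu> \<in> hom (free_Abelian_group S) G" and a: "a \<notin> S" and g: "g \<in> carrier G"
  obtains \<nu>' where "\<nu>' \<in> hom (free_Abelian_group (insert a S)) G" "\<nu>' (frag_of a) = g"
    "\<And>u. Poly_Mapping.keys u \<subseteq> S \<Longrightarrow> \<nu>' u = \<nu> u"
proof -
  have "(\<lambda>y. if y = a then g else \<nu> (frag_of y)) ` insert a S \<subseteq> carrier G"
    using g hom_in_carrier[OF \<nu>] by auto
  then obtain \<nu>' where \<nu>': "\<nu>' \<in> hom (free_Abelian_group (insert a S)) G"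
    "\<And>y. y \<in> insert a S \<Longrightarrow> \<nu>' (frag_of y) = (if y = a then g else \<nu> (frag_of y))"
    by (rule free_Abelian_group_universal) blast
  have "\<nu>' u = \<nu> u" if "Poly_Mapping.keys u \<subseteq> S" for u
  proof (rule hom_free_Abelian_group_eqI[OF is_group \<nu>'(1) \<nu> subset_insertI subset_refl _ that])
    show "\<nu>' (frag_of z) = \<nu> (frag_of z)" if "z \<in> S" for z using \<nu>'(2)[of z] that a by auto
  qed
  then show ?thesis using that \<nu>' by simp
qed

lemma hom_free_Abelian_group_into_smaller:
  assumes \<psi>: "\<psi> \<in> hom (free_Abelian_group X) (free_Abelian_group (insert s T))"
    and zero: "\<And>x. x \<in> X \<Longrightarrow> poly_mapping.lookup (\<psi> (frag_of x)) s = 0"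
  shows "\<psi> \<in> hom (free_Abelian_group X) (free_Abelian_group T)"
proof (rule homI)
  fix w assume "w \<in> carrier (free_Abelian_group X)"
  then have w: "Poly_Mapping.keys w \<subseteq> X" by simp
  have "poly_mapping.lookup (\<psi> w) s = 0"
    using w
  proof (rule free_Abelian_group_induct)
    show "poly_mapping.lookup (\<psi> 0) s = 0"
      using hom_free_Abelian_group_zero[OF group_free_Abelian_group \<psi>] by simp
  qed (use hom_frag_diff[OF \<psi>] zero in \<open>simp_all add: lookup_minus\<close>)
  moreover have "Poly_Mapping.keys (\<psi> w) \<subseteq> insert s T"
    using hom_in_carrier[OF \<psi>] w by simp
  ultimately show "\<psi> w \<in> carrier (free_Abelian_group T)" by (auto simp: in_keys_iff)
next
  fix x y assume "x \<in> carrier (free_Abelian_group X)" "y \<in> carrier (free_Abelian_group X)"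
  then show "\<psi> (x \<otimes>\<^bsub>free_Abelian_group X\<^esub> y) = \<psi> x \<otimes>\<^bsub>free_Abelian_group T\<^esub> \<psi> y"
    using hom_frag_add[OF \<psi>] by simp
qed

lemma hom_free_Abelian_group_eliminate:
  assumes \<psi>: "\<psi> \<in> hom (free_Abelian_group X) (free_Abelian_group (insert s S))"
    and x0: "x0 \<in> X" "poly_mapping.lookup (\<psi> (frag_of x0)) s \<noteq> 0"
  obtains \<theta> where "\<theta> \<in> hom (free_Abelian_group (X - {x0})) (free_Abelian_group X)"
    "\<psi> \<circ> \<theta> \<in> hom (free_Abelian_group (X - {x0})) (free_Abelian_group S)"
    "\<And>w. Poly_Mapping.keys w \<subseteq> X - {x0} \<Longrightarrow> \<theta> w = 0 \<Longrightarrow> w = 0"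
proof -
  define c where "c w = poly_mapping.lookup (\<psi> w) s" for w
  \<comment> \<open>The s-coordinate of \<psi> (\<theta> w) is c (frag_of x0) * c w - c w * c (frag_of x0) = 0.\<close>
  define \<theta> where "\<theta> w = frag_cmul (c (frag_of x0)) w - frag_cmul (c w) (frag_of x0)" for w
  have x0_keys: "Poly_Mapping.keys (frag_of x0) \<subseteq> X" using x0(1) by (simp add: keys_frag_of)
  have c_add: "c (a + b) = c a + c b"
    if "Poly_Mapping.keys a \<subseteq> X" "Poly_Mapping.keys b \<subseteq> X" for a b
    using hom_frag_add[OF \<psi> that] by (simp add: c_def lookup_add)
  have keys_\<theta>: "Poly_Mapping.keys (\<theta> w) \<subseteq> X" if "Poly_Mapping.keys w \<subseteq> X" for w
    using that x0(1) keys_diff[of "frag_cmul (c (frag_of x0)) w" "frag_cmul (c w) (frag_of x0)"]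
    unfolding \<theta>_def by (auto simp: keys_frag_of)
  have \<theta>: "\<theta> \<in> hom (free_Abelian_group (X - {x0})) (free_Abelian_group X)"
  proof (rule homI)
    fix a b assume "a \<in> carrier (free_Abelian_group (X - {x0}))" "b \<in> carrier (free_Abelian_group (X - {x0}))"
    then have "c (a + b) = c a + c b" by (intro c_add) auto
    then show "\<theta> (a \<otimes>\<^bsub>free_Abelian_group (X - {x0})\<^esub> b) = \<theta> a \<otimes>\<^bsub>free_Abelian_group X\<^esub> \<theta> b"
      by (simp add: \<theta>_def frag_cmul_distrib frag_cmul_distrib2 algebra_simps)
  qed (use keys_\<theta> in auto)
  have "\<psi> \<circ> \<theta> \<in> hom (free_Abelian_group (X - {x0})) (free_Abelian_group S)"
  proof (rule hom_free_Abelian_group_into_smaller)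
    show "\<psi> \<circ> \<theta> \<in> hom (free_Abelian_group (X - {x0})) (free_Abelian_group (insert s S))"
      using \<theta> \<psi> by (rule hom_compose)
  next
    fix x assume "x \<in> X - {x0}"
    then have x: "Poly_Mapping.keys (frag_of x) \<subseteq> X" by (auto simp: keys_frag_of)
    have cmul: "\<psi> (frag_cmul n w) = frag_cmul n (\<psi> w)" if "Poly_Mapping.keys w \<subseteq> X" for n w
      using hom_free_Abelian_group_cmul[OF group_free_Abelian_group \<psi> that]
        hom_in_carrier[OF \<psi>] that by simp
    have "\<psi> (\<theta> (frag_of x)) = \<psi> (frag_cmul (c (frag_of x0)) (frag_of x))
        - \<psi> (frag_cmul (c (frag_of x)) (frag_of x0))"
      unfolding \<theta>_def by (rule hom_frag_diff[OF \<psi>]) (use x x0_keys keys_cmul in \<open>blast+\<close>)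
    also have "\<dots> = frag_cmul (c (frag_of x0)) (\<psi> (frag_of x))
        - frag_cmul (c (frag_of x)) (\<psi> (frag_of x0))"
      using cmul x x0_keys by simp
    finally show "poly_mapping.lookup ((\<psi> \<circ> \<theta>) (frag_of x)) s = 0"
      by (simp add: lookup_minus c_def)
  qed
  moreover have "w = 0" if "Poly_Mapping.keys w \<subseteq> X - {x0}" "\<theta> w = 0" for w
  proof (rule ccontr)
    assume "w \<noteq> 0"
    then obtain x where x: "x \<in> Poly_Mapping.keys w" by fastforce
    then have "poly_mapping.lookup (\<theta> w) x = c (frag_of x0) * poly_mapping.lookup w x"
      using that(1) by (auto simp: \<theta>_def lookup_minus)
    then show False using x x0(2) that(2) by (simp add: in_keys_iff c_def)
  qed
  ultimately show ?thesis using that \<theta> by blast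
qed

lemma hom_free_Abelian_group_kernel:
  assumes "finite S" "finite X" "card S < card X"
    and "\<psi> \<in> hom (free_Abelian_group X) (free_Abelian_group S)"
  shows "\<exists>w. Poly_Mapping.keys w \<subseteq> X \<and> w \<noteq> 0 \<and> \<psi> w = 0"
  using assms
proof (induction S arbitrary: X \<psi> rule: finite_induct)
  case empty
  then obtain x where "x \<in> X" by fastforce
  moreover have "\<psi> (frag_of x) \<in> carrier (free_Abelian_group {})"
    using hom_in_carrier[OF empty.prems(3)] \<open>x \<in> X\<close> by simp
  ultimately show ?case by (intro exI[of _ "frag_of x"]) (simp add: keys_frag_of)
next
  case (insert s S)
  note \<psi> = insert.prems(3)
  show ?case
  proof (cases "\<forall>x \<in> X. poly_mapping.lookup (\<psi> (frag_of x)) s = 0")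
    case True
    then have "\<psi> \<in> hom (free_Abelian_group X) (free_Abelian_group S)"
      using hom_free_Abelian_group_into_smaller[OF \<psi>] by simp
    then show ?thesis using insert by simp
  next
    case False
    then obtain x0 where x0: "x0 \<in> X" "poly_mapping.lookup (\<psi> (frag_of x0)) s \<noteq> 0" by blast
    then obtain \<theta> where \<theta>: "\<theta> \<in> hom (free_Abelian_group (X - {x0})) (free_Abelian_group X)"
      "\<psi> \<circ> \<theta> \<in> hom (free_Abelian_group (X - {x0})) (free_Abelian_group S)"
      "\<And>w. Poly_Mapping.keys w \<subseteq> X - {x0} \<Longrightarrow> \<theta> w = 0 \<Longrightarrow> w = 0"
      using hom_free_Abelian_group_eliminate[OF \<psi>] by blast
    have "finite (X - {x0})" "card S < card (X - {x0})" using insert x0 by auto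
    then obtain w where w: "Poly_Mapping.keys w \<subseteq> X - {x0}" "w \<noteq> 0" "\<psi> (\<theta> w) = 0"
      using insert.IH[OF _ _ \<theta>(2)] by (metis comp_apply)
    have "Poly_Mapping.keys (\<theta> w) \<subseteq> X" using hom_in_carrier[OF \<theta>(1)] w(1) by simp
    then show ?thesis using w \<theta>(3) by blast
  qed
qed

lemma iso_free_Abelian_group_hom_kernel:
  assumes "group H" "H \<cong> free_Abelian_group S" "finite S" "finite X" "card S < card X"
    and "\<mu> \<in> hom (free_Abelian_group X) H"
  shows "\<exists>w. Poly_Mapping.keys w \<subseteq> X \<and> w \<noteq> 0 \<and> \<mu> w = \<one>\<^bsub>H\<^esub>"
proof -
  obtain \<phi> where \<phi>: "\<phi> \<in> iso H (free_Abelian_group S)" using assms(2) by (auto simp: is_iso_def)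
  then have \<phi>_hom: "\<phi> \<in> hom H (free_Abelian_group S)" and \<phi>_inj: "inj_on \<phi> (carrier H)"
    by (auto simp: iso_iff)
  obtain w where w: "Poly_Mapping.keys w \<subseteq> X" "w \<noteq> 0" "\<phi> (\<mu> w) = 0"
    using hom_free_Abelian_group_kernel[OF assms(3-5) hom_compose[OF assms(6) \<phi>_hom]] by auto
  have "\<phi> \<one>\<^bsub>H\<^esub> = 0" using hom_one[OF \<phi>_hom assms(1)] by simp
  then have "\<mu> w = \<one>\<^bsub>H\<^esub>"
    using w(1,3) inj_onD[OF \<phi>_inj] hom_in_carrier[OF assms(6)]
      monoid.one_closed[OF group.is_monoid[OF assms(1)]]
    by (metis carrier_free_Abelian_group_iff)
  then show ?thesis using w(1,2) by blast
qed

lemma LKer_iff: "u \<in> LKer K X \<mu> \<longleftrightarrow> wf X u \<and> \<mu> \<in> hom (W X) K \<and> sat K X u \<mu>"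
  by (simp add: LKer_def Val_def)

lemma isotyped_sym: "isotyped H G \<Longrightarrow> isotyped G H"
  by (simp add: isotyped_def)

lemma isotyped_obtain_point:
  assumes "isotyped H G" "finite X" "\<mu> \<in> hom (W X) H"
  obtains \<nu> where "\<nu> \<in> hom (W X) G" "LKer G X \<nu> = LKer H X \<mu>"
proof -
  have "is_type H X (LKer H X \<mu>)" using assms(3) by (auto simp: is_type_def)
  then have "is_type G X (LKer H X \<mu>)" using assms(1,2) by (simp add: isotyped_def)
  then show ?thesis using that by (auto simp: is_type_def)
qed

lemma LKer_eq_sat_iff:
  assumes "LKer G X \<nu> = LKer H X \<mu>" "\<nu> \<in> hom (W X) G" "\<mu> \<in> hom (W X) H" "wf X u"
  shows "sat G X u \<nu> \<longleftrightarrow> sat H X u \<mu>"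
  using assms by (metis LKer_iff)

lemma LKer_eq_eq_iff:
  assumes "LKer G X \<nu> = LKer H X \<mu>" "\<nu> \<in> hom (W X) G" "\<mu> \<in> hom (W X) H"
    and "w \<in> carrier (W X)" "w' \<in> carrier (W X)"
  shows "\<nu> w = \<nu> w' \<longleftrightarrow> \<mu> w = \<mu> w'"
  using LKer_eq_sat_iff[OF assms(1-3) wf_Eq[OF assms(4,5)]] by simp

lemma LKer_eq_inj_on:
  assumes "LKer G X \<nu> = LKer H X \<mu>" "\<nu> \<in> hom (W X) G" "\<mu> \<in> hom (W X) H"
    and "inj_on \<mu> (carrier (W X))"
  shows "inj_on \<nu> (carrier (W X))"
  using assms LKer_eq_eq_iff[OF assms(1-3)] by (simp add: inj_on_def)

lemma isotyped_torsion_free: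
  assumes "group H" "comm_group G" "isotyped G H" "torsion_free H"
  shows "torsion_free G"
  unfolding torsion_free_def
proof (intro ballI allI impI)
  fix g and n :: int
  assume g: "g \<in> carrier G" and n: "n \<noteq> 0" and pow: "g [^]\<^bsub>G\<^esub> n = \<one>\<^bsub>G\<^esub>"
  have G: "group G" using assms(2) by (rule comm_group.axioms)
  define x :: "nat \<Rightarrow>\<^sub>0 int" where "x = frag_of 0"
  have x: "x \<in> carrier (W {0})" "Poly_Mapping.keys x \<subseteq> {0}" by (simp_all add: x_def keys_frag_of)
  obtain \<rho> where \<rho>: "\<rho> \<in> hom (W {0}) G" "\<rho> x = g"
    using comm_group.free_Abelian_group_universal[OF assms(2), of "\<lambda>_. g" "{0}"] g
    by (auto simp: x_def)
  obtain \<rho>' where \<rho>': "\<rho>' \<in> hom (W {0}) H" "LKer H {0} \<rho>' = LKer G {0} \<rho>"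
    using isotyped_obtain_point[OF assms(3) _ \<rho>(1)] by auto
  note eq_iff = LKer_eq_eq_iff[OF \<rho>'(2,1) \<rho>(1)]
  have nx: "frag_cmul n x \<in> carrier (W {0})" using x(2) keys_cmul[of n x] by auto
  have "\<rho> (frag_cmul n x) = \<rho> 0"
    using hom_free_Abelian_group_cmul[OF G \<rho>(1) x(2)] hom_free_Abelian_group_zero[OF G \<rho>(1)] \<rho>(2) pow
    by simp
  then have "\<rho>' (frag_cmul n x) = \<rho>' 0" using eq_iff[OF nx] by simp
  then have "\<rho>' x [^]\<^bsub>H\<^esub> n = \<one>\<^bsub>H\<^esub>"
    using hom_free_Abelian_group_cmul[OF assms(1) \<rho>'(1) x(2)] hom_free_Abelian_group_zero[OF assms(1) \<rho>'(1)]
    by simp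
  then have "\<rho>' x = \<rho>' 0"
    using assms(4) n hom_in_carrier[OF \<rho>'(1) x(1)] hom_free_Abelian_group_zero[OF assms(1) \<rho>'(1)]
    by (simp add: torsion_free_def)
  then have "\<rho> x = \<rho> 0" using eq_iff[OF x(1)] by simp
  then show "g = \<one>\<^bsub>G\<^esub>" using \<rho>(2) hom_free_Abelian_group_zero[OF G \<rho>(1)] by simp
qed

definition drop_var :: "'a \<Rightarrow> ('a \<Rightarrow>\<^sub>0 int) \<Rightarrow> ('a \<Rightarrow>\<^sub>0 int)" where
  "drop_var a w = w - frag_cmul (poly_mapping.lookup w a) (frag_of a)"

lemma keys_drop_var:
  assumes "Poly_Mapping.keys w \<subseteq> insert a S"
  shows "Poly_Mapping.keys (drop_var a w) \<subseteq> S"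
proof
  fix y assume y: "y \<in> Poly_Mapping.keys (drop_var a w)"
  then have "y \<noteq> a" by (auto simp: drop_var_def in_keys_iff lookup_minus)
  moreover have "y \<in> Poly_Mapping.keys w"
    using y by (auto simp: drop_var_def in_keys_iff lookup_minus split: if_splits)
  ultimately show "y \<in> S" using assms by blast
qed

lemma drop_var_frag_of: "b \<noteq> a \<Longrightarrow> drop_var a (frag_of b) = frag_of b"
  by (simp add: drop_var_def)

lemma drop_var_hom: "drop_var a \<in> hom (free_Abelian_group (insert a S)) (free_Abelian_group S)"
proof (rule homI)
  fix x y
  show "drop_var a (x \<otimes>\<^bsub>free_Abelian_group (insert a S)\<^esub> y) =
      drop_var a x \<otimes>\<^bsub>free_Abelian_group S\<^esub> drop_var a y"
    by (simp add: drop_var_def lookup_add frag_cmul_distrib)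
qed (simp add: keys_drop_var)

text \<open>Quantifying over a fresh variable a requires the sort insert a S; pulling back along
  drop_var a turns the formula into one of sort S.\<close>

definition divisible_fm :: "nat set \<Rightarrow> nat \<Rightarrow> int \<Rightarrow> (nat \<Rightarrow>\<^sub>0 int) \<Rightarrow> fm" where
  "divisible_fm S a n v = Subst (insert a S) (drop_var a) (Ex a (Eq (frag_cmul n (frag_of a)) v))"

lemma wf_divisible_fm:
  assumes "finite S" "Poly_Mapping.keys v \<subseteq> S"
  shows "wf S (divisible_fm S a n v)"
  unfolding divisible_fm_def
  by (intro wf_Subst drop_var_hom wf_Ex wf_Eq) (use assms keys_cmul in \<open>auto simp: keys_frag_of\<close>)

lemma sat_divisible_fm:
  assumes K: "comm_group K" and a: "a \<notin> S" and \<mu>: "\<mu> \<in> hom (W S) K"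
    and v: "Poly_Mapping.keys v \<subseteq> S"
  shows "sat K S (divisible_fm S a n v) \<mu> \<longleftrightarrow> (\<exists>h \<in> carrier K. h [^]\<^bsub>K\<^esub> n = \<mu> v)"
proof -
  interpret K: comm_group K by (rule K)
  have sat_iff: "sat K S (divisible_fm S a n v) \<mu> \<longleftrightarrow> (\<exists>\<rho> \<in> hom (W (insert a S)) K.
      (\<forall>y \<in> S. \<rho> (frag_of y) = \<mu> (frag_of y)) \<and> \<rho> (frag_cmul n (frag_of a)) = \<rho> v)"
  proof -
    have "\<forall>y \<in> S. drop_var a (frag_of y) = frag_of y" using a drop_var_frag_of by metis
    then show ?thesis using a by (simp add: divisible_fm_def)
  qed
  have \<rho>_cmul: "\<rho> (frag_cmul n (frag_of a)) = \<rho> (frag_of a) [^]\<^bsub>K\<^esub> n"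
    if "\<rho> \<in> hom (W (insert a S)) K" for \<rho>
    using hom_free_Abelian_group_cmul[OF K.is_group that] by (simp add: keys_frag_of)
  show ?thesis
  proof
    assume "sat K S (divisible_fm S a n v) \<mu>"
    then obtain \<rho> where \<rho>: "\<rho> \<in> hom (W (insert a S)) K"
      "\<forall>y \<in> S. \<rho> (frag_of y) = \<mu> (frag_of y)" "\<rho> (frag_cmul n (frag_of a)) = \<rho> v"
      using sat_iff by blast
    have "\<rho> v = \<mu> v"
      using hom_free_Abelian_group_eqI[OF K.is_group \<rho>(1) \<mu> subset_insertI subset_refl _ v] \<rho>(2) by blast
    then have "\<rho> (frag_of a) [^]\<^bsub>K\<^esub> n = \<mu> v" using \<rho>(3) \<rho>_cmul[OF \<rho>(1)] by simp
    moreover have "\<rho> (frag_of a) \<in> carrier K" using hom_in_carrier[OF \<rho>(1)] by simp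
    ultimately show "\<exists>h \<in> carrier K. h [^]\<^bsub>K\<^esub> n = \<mu> v" by blast
  next
    assume "\<exists>h \<in> carrier K. h [^]\<^bsub>K\<^esub> n = \<mu> v"
    then obtain h where h: "h \<in> carrier K" "h [^]\<^bsub>K\<^esub> n = \<mu> v" by blast
    obtain \<rho> where \<rho>: "\<rho> \<in> hom (W (insert a S)) K" "\<rho> (frag_of a) = h"
      "\<And>u. Poly_Mapping.keys u \<subseteq> S \<Longrightarrow> \<rho> u = \<mu> u"
      using K.hom_free_Abelian_group_extend[OF \<mu> a h(1)] by blast
    have "\<forall>y \<in> S. \<rho> (frag_of y) = \<mu> (frag_of y)" using \<rho>(3) by (simp add: keys_frag_of)
    moreover have "\<rho> (frag_cmul n (frag_of a)) = \<rho> v" using \<rho>_cmul[OF \<rho>(1)] \<rho>(2,3) h(2) v by simp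
    ultimately show "sat K S (divisible_fm S a n v) \<mu>" using sat_iff \<rho>(1) by blast
  qed
qed

lemma isotyped_power_in_image:
  assumes H: "group H" and G: "comm_group G" and "isotyped G H"
    and S: "finite S" "H \<cong> W S"
    and \<nu>: "\<nu> \<in> hom (W S) G" and \<nu>_inj: "inj_on \<nu> (carrier (W S))" and g: "g \<in> carrier G"
  obtains n :: int and v where "n \<noteq> 0" "v \<in> carrier (W S)" "\<nu> v = g [^]\<^bsub>G\<^esub> n"
proof -
  interpret G: comm_group G by (rule G)
  obtain a :: nat where a: "a \<notin> S" using S(1) ex_new_if_finite infinite_UNIV_nat by blast
  obtain \<nu>' where \<nu>': "\<nu>' \<in> hom (W (insert a S)) G" "\<nu>' (frag_of a) = g"
    and \<nu>'_S: "\<And>u. Poly_Mapping.keys u \<subseteq> S \<Longrightarrow> \<nu>' u = \<nu> u"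
    using G.hom_free_Abelian_group_extend[OF \<nu> a g] by blast
  obtain \<mu>' where \<mu>': "\<mu>' \<in> hom (W (insert a S)) H" "LKer H (insert a S) \<mu>' = LKer G (insert a S) \<nu>'"
    using isotyped_obtain_point[OF assms(3) _ \<nu>'(1)] S(1) by blast
  \<comment> \<open>H has rank card S, so the extended point of H satisfies a nontrivial relation; so does \<nu>'.\<close>
  obtain w where w: "Poly_Mapping.keys w \<subseteq> insert a S" "w \<noteq> 0" "\<mu>' w = \<one>\<^bsub>H\<^esub>"
    using iso_free_Abelian_group_hom_kernel[OF H S(2,1) _ _ \<mu>'(1)] S(1) a by auto
  then have "\<mu>' w = \<mu>' 0" using hom_free_Abelian_group_zero[OF H \<mu>'(1)] by simp
  then have "\<nu>' w = \<one>\<^bsub>G\<^esub>"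
    using LKer_eq_eq_iff[OF \<mu>'(2,1) \<nu>'(1), of w 0] w(1) hom_free_Abelian_group_zero[OF G.is_group \<nu>'(1)]
    by simp
  define n where "n = poly_mapping.lookup w a"
  define u where "u = drop_var a w"
  have u: "u \<in> carrier (W S)" using keys_drop_var[OF w(1)] by (simp add: u_def)
  have "\<nu>' w = \<nu>' (frag_cmul n (frag_of a) \<otimes>\<^bsub>W (insert a S)\<^esub> u)"
    by (simp add: n_def u_def drop_var_def)
  also have "\<dots> = \<nu>' (frag_cmul n (frag_of a)) \<otimes>\<^bsub>G\<^esub> \<nu>' u"
    by (rule hom_mult[OF \<nu>'(1)]) (use u keys_cmul in \<open>auto simp: keys_frag_of\<close>)
  also have "\<dots> = g [^]\<^bsub>G\<^esub> n \<otimes>\<^bsub>G\<^esub> \<nu> u"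
    using hom_free_Abelian_group_cmul[OF G.is_group \<nu>'(1), of "frag_of a" n] \<nu>'(2) \<nu>'_S u
    by (simp add: keys_frag_of)
  finally have rel: "g [^]\<^bsub>G\<^esub> n \<otimes>\<^bsub>G\<^esub> \<nu> u = \<one>\<^bsub>G\<^esub>" using \<open>\<nu>' w = \<one>\<^bsub>G\<^esub>\<close> by simp
  have \<nu>_u: "\<nu> u \<in> carrier G" using hom_in_carrier[OF \<nu> u] .
  have "n \<noteq> 0"
  proof
    assume "n = 0"
    then have "\<nu> u = \<nu> 0" using rel \<nu>_u hom_free_Abelian_group_zero[OF G.is_group \<nu>] by simp
    then have "u = 0" using \<nu>_inj u by (simp add: inj_on_eq_iff)
    then show False using w(2) \<open>n = 0\<close> by (simp add: n_def u_def drop_var_def)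
  qed
  moreover have "- u \<in> carrier (W S)" using u by simp
  moreover have "\<nu> (- u) = inv\<^bsub>G\<^esub> (\<nu> u)"
    using hom_free_Abelian_group_diff[OF G.is_group \<nu>, of 0 u] u hom_free_Abelian_group_zero[OF G.is_group \<nu>] \<nu>_u
    by simp
  then have "\<nu> (- u) = g [^]\<^bsub>G\<^esub> n" using G.inv_equality[OF rel \<nu>_u] g by simp
  ultimately show ?thesis by (rule that)
qed

lemma isotyped_point_surj:
  assumes H: "comm_group H" and G: "comm_group G" and "isotyped G H" and S: "finite S"
    and \<mu>: "\<mu> \<in> iso (W S) H" and \<nu>: "\<nu> \<in> hom (W S) G" and same: "LKer G S \<nu> = LKer H S \<mu>"
    and tf: "torsion_free G" and g: "g \<in> carrier G"
  shows "g \<in> \<nu> ` carrier (W S)"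
proof -
  interpret H: comm_group H by (rule H)
  interpret G: comm_group G by (rule G)
  have \<mu>_hom: "\<mu> \<in> hom (W S) H" and \<mu>_inj: "inj_on \<mu> (carrier (W S))"
    and \<mu>_surj: "\<mu> ` carrier (W S) = carrier H"
    using \<mu> by (auto simp: iso_iff)
  have "H \<cong> W S" using \<mu> by (intro group.iso_sym[OF group_free_Abelian_group] is_isoI)
  then obtain n :: int and v where n: "n \<noteq> 0" and v: "v \<in> carrier (W S)" and "\<nu> v = g [^]\<^bsub>G\<^esub> n"
    using isotyped_power_in_image[OF H.is_group G assms(3) S _ \<nu> LKer_eq_inj_on[OF same \<nu> \<mu>_hom \<mu>_inj] g]
    by blast
  obtain a :: nat where a: "a \<notin> S" using S ex_new_if_finite infinite_UNIV_nat by blast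
  have v_keys: "Poly_Mapping.keys v \<subseteq> S" using v by simp
  \<comment> \<open>v is divisible by n at \<nu>, hence at \<mu>, hence in W S since \<mu> is an isomorphism.\<close>
  have "sat G S (divisible_fm S a n v) \<nu>"
    using sat_divisible_fm[OF G a \<nu> v_keys] g \<open>\<nu> v = g [^]\<^bsub>G\<^esub> n\<close> by auto
  then have "sat H S (divisible_fm S a n v) \<mu>"
    using LKer_eq_sat_iff[OF same \<nu> \<mu>_hom wf_divisible_fm[OF S v_keys]] by simp
  then obtain h where "h \<in> carrier H" "h [^]\<^bsub>H\<^esub> n = \<mu> v"
    using sat_divisible_fm[OF H a \<mu>_hom v_keys] by blast
  then obtain u where u: "u \<in> carrier (W S)" and "\<mu> u [^]\<^bsub>H\<^esub> n = \<mu> v"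
    using \<mu>_surj by (metis imageE)
  then have "\<mu> (frag_cmul n u) = \<mu> v"
    using hom_free_Abelian_group_cmul[OF H.is_group \<mu>_hom] by simp
  then have "frag_cmul n u = v"
    using \<mu>_inj u v keys_cmul[of n u] by (auto simp: inj_on_eq_iff)
  then have "g [^]\<^bsub>G\<^esub> n = \<nu> u [^]\<^bsub>G\<^esub> n"
    using hom_free_Abelian_group_cmul[OF G.is_group \<nu>] u \<open>\<nu> v = g [^]\<^bsub>G\<^esub> n\<close> by auto
  then have "g = \<nu> u"
    using G.torsion_free_int_pow_cancel[OF tf g hom_in_carrier[OF \<nu> u] n] by simp
  then show ?thesis using u by blast
qed

lemma isotyped_free_fg_iso:
  assumes H: "comm_group H" and G: "comm_group G" and "isotyped H G" and "free_fg H"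
  shows "H \<cong> G"
proof -
  interpret H: comm_group H by (rule H)
  obtain S :: "nat set" where S: "finite S" "H \<cong> W S" using \<open>free_fg H\<close> free_fg_def by blast
  then obtain \<mu> where \<mu>: "\<mu> \<in> iso (W S) H" using H.iso_sym by (auto simp: is_iso_def)
  then have \<mu>_hom: "\<mu> \<in> hom (W S) H" and \<mu>_inj: "inj_on \<mu> (carrier (W S))"
    by (auto simp: iso_iff)
  obtain \<nu> where \<nu>: "\<nu> \<in> hom (W S) G" and same: "LKer G S \<nu> = LKer H S \<mu>"
    using isotyped_obtain_point[OF assms(3) S(1) \<mu>_hom] by blast
  have "torsion_free H"
    using torsion_free_iso[OF H.is_group group_free_Abelian_group S(2) torsion_free_free_Abelian_group] .
  then have "torsion_free G"
    using isotyped_torsion_free[OF H.is_group G isotyped_sym[OF assms(3)]] by blast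
  then have "\<nu> ` carrier (W S) = carrier G"
    using isotyped_point_surj[OF H G isotyped_sym[OF assms(3)] S(1) \<mu> \<nu> same] hom_in_carrier[OF \<nu>]
    by blast
  then have "\<nu> \<in> iso (W S) G"
    using \<nu> LKer_eq_inj_on[OF same \<nu> \<mu>_hom \<mu>_inj] by (simp add: iso_iff)
  then show ?thesis using S(2) by (blast intro: iso_trans is_isoI)
qed

theorem mainTheorem8:
  assumes "comm_group H" and "comm_group G"
    and "isotyped H G"
    and "free_fg H \<or> free_fg G"
  shows "H \<cong> G"
  using assms(4)
proof
  assume "free_fg G"
  then have "G \<cong> H" by (rule isotyped_free_fg_iso[OF assms(2,1) isotyped_sym[OF assms(3)]])
  then show ?thesis using comm_group.axioms(2)[OF assms(2)] group.iso_sym by blast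
qed (rule isotyped_free_fg_iso[OF assms(1-3)])

end
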